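(* Let $\sigma\colon\mathcal{A}^+\to\mathcal{B}^+$ be a morphism, $u,v\in\mathcal{A}^+$, let $a,b$ be the first letters of $u,v$ respectively, and let $\sigma(a)=st$ with $t$ nonempty (and $s$ possibly empty). Assume that $\sigma(u)$ is a prefix of $s\sigma(v)$, that $|u|\ge|\sigma|_1+|s|$, and that either ($s$ is empty and $a\neq b$) or $s$ is nonempty. Then there exist an alphabet $\mathcal{C}$ and morphisms $q\colon\mathcal{A}^+\to\mathcal{C}^+$, $p\colon\mathcal{C}^+\to\mathcal{B}^+$ such that $\#\mathcal{C}\le\#\mathcal{A}$, $q$ is letter-onto, $|p|_1<|\sigma|_1$, and $\sigma=pq$.
   Context: Alphabets are finite sets; $\mathcal{A}^+$ is the free semigroup of nonempty finite words over $\mathcal{A}$; a morphism is a semigroup homomorphism. For a morphism $\sigma\colon\mathcal{A}^+\to\mathcal{B}^+$, $|\sigma|_1=\sum_{a\in\mathcal{A}}|\sigma(a)|$. A word $w$ is a prefix of $w'$ if $w'=wr$ for some possibly empty word $r$. $q$ is letter-onto if every letter of its target alphabet occurs in some $q(a)$. *)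

theory Defs
  imports Main "HOL-Library.Sublist"
begin

text \<open>A morphism A+ -> B+ is given by its letter images, which are nonempty words over B.\<close>
definition morphism :: "'a set \<Rightarrow> 'b set \<Rightarrow> ('a \<Rightarrow> 'b list) \<Rightarrow> bool" where
  "morphism A B f \<longleftrightarrow> finite A \<and> finite B \<and> (\<forall>x\<in>A. f x \<noteq> [] \<and> set (f x) \<subseteq> B)"

definition ext :: "('a \<Rightarrow> 'b list) \<Rightarrow> 'a list \<Rightarrow> 'b list" where
  "ext f w = concat (map f w)"

definition size1 :: "'a set \<Rightarrow> ('a \<Rightarrow> 'b list) \<Rightarrow> nat" where
  "size1 A f = (\<Sum>x\<in>A. length (f x))"

definition letter_onto :: "'a set \<Rightarrow> 'c set \<Rightarrow> ('a \<Rightarrow> 'c list) \<Rightarrow> bool" where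
  "letter_onto A C q \<longleftrightarrow> (\<forall>c\<in>C. \<exists>x\<in>A. c \<in> set (q x))"

end

theory Submission
  imports Defs
begin

text \<open>If s is empty, the image of one of the letters a, b is a prefix of the other; identifying
  the two letters, or the Nielsen substitution b \<mapsto> a b (when \<sigma>(b) = \<sigma>(a) z), already shortens
  \<sigma>.  Otherwise each of the length u cuts of \<sigma>(u) after one of its letters falls, after the
  shift by s, inside the image of a letter of v.  Since length u exceeds \<bar>\<sigma>\<bar>_1, either some cut
  falls exactly at the end of a letter image, or two cuts fall at the same offset inside the same
  letter.  Either way one gets a nontrivial relation for the morphism obtained by splitting one
  letter image into two nonempty halves.  By the defect theorem this split morphism factors through
  an alphabet with one letter fewer, i.e. with at most #A letters, and the factorization strictly
  shortens it, whereas the split itself preserves the total length.\<close>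

lemma ext_Nil [simp]: "ext f [] = []"
  and ext_Cons [simp]: "ext f (x # w) = f x @ ext f w"
  and ext_append [simp]: "ext f (w1 @ w2) = ext f w1 @ ext f w2"
  by (simp_all add: ext_def)

lemma set_ext: "set (ext f w) = (\<Union>x\<in>set w. set (f x))"
  by (simp add: ext_def)

lemma ext_eq_Nil_iff: "ext f w = [] \<longleftrightarrow> (\<forall>x\<in>set w. f x = [])"
  by (simp add: ext_def)

lemma length_ext: "length (ext f w) = (\<Sum>x\<leftarrow>w. length (f x))"
  by (induction w) auto

lemma ext_cong: "(\<And>x. x \<in> set w \<Longrightarrow> f x = g x) \<Longrightarrow> ext f w = ext g w"
  by (induction w) auto

lemma ext_ext: "ext (\<lambda>x. ext p (q x)) w = ext p (ext q w)"
  by (induction w) auto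

lemma prefix_ext: "prefix w w' \<Longrightarrow> prefix (ext f w) (ext f w')"
  by (auto simp: prefix_def)

lemma morphism_ext_nonempty: "morphism A B f \<Longrightarrow> w \<noteq> [] \<Longrightarrow> set w \<subseteq> A \<Longrightarrow> ext f w \<noteq> []"
  by (cases w) (auto simp: morphism_def)

lemma morphism_set_ext: "morphism A B f \<Longrightarrow> set w \<subseteq> A \<Longrightarrow> set (ext f w) \<subseteq> B"
  by (auto simp: morphism_def set_ext)

definition factors_through ::
    "'a set \<Rightarrow> 'c set \<Rightarrow> 'b set \<Rightarrow> ('a \<Rightarrow> 'b list) \<Rightarrow> ('a \<Rightarrow> 'c list) \<Rightarrow> ('c \<Rightarrow> 'b list) \<Rightarrow> bool" where
  "factors_through A C B \<sigma> q p \<longleftrightarrow>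
     morphism A C q \<and> morphism C B p \<and> letter_onto A C q \<and> (\<forall>x\<in>A. \<sigma> x = ext p (q x))"

lemma factors_through_trans:
  assumes "factors_through A E B \<sigma> h \<tau>" and "factors_through E C B \<tau> q p"
  shows "factors_through A C B \<sigma> (\<lambda>x. ext q (h x)) p"
proof -
  have h: "finite A" "\<And>x. x \<in> A \<Longrightarrow> h x \<noteq> [] \<and> set (h x) \<subseteq> E"
    and q: "finite C" "\<And>e. e \<in> E \<Longrightarrow> q e \<noteq> [] \<and> set (q e) \<subseteq> C"
    using assms by (auto simp: factors_through_def morphism_def)
  have "morphism A C (\<lambda>x. ext q (h x))"
    unfolding morphism_def using h q
    by (auto simp: ext_eq_Nil_iff set_ext) (metis neq_Nil_conv subsetD list.set_intros(1))
  moreover have "letter_onto A C (\<lambda>x. ext q (h x))"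
    using assms unfolding factors_through_def letter_onto_def set_ext by fast
  moreover have "\<sigma> x = ext p (ext q (h x))" if "x \<in> A" for x
  proof -
    have "\<sigma> x = ext \<tau> (h x)" using assms that by (simp add: factors_through_def)
    also have "\<dots> = ext (\<lambda>e. ext p (q e)) (h x)"
      by (rule ext_cong) (use assms h that in \<open>auto simp: factors_through_def\<close>)
    finally show ?thesis by (simp only: ext_ext)
  qed
  ultimately show ?thesis using assms by (simp add: factors_through_def)
qed

lemma sum_set_le_sum_list: "(\<Sum>x\<in>set w. f x) \<le> (\<Sum>x\<leftarrow>w. (f x :: nat))"
  by (induction w) (auto simp: sum.insert_if)

text \<open>Choosing for each letter of C one letter of D whose image contains it leaves some letter
  of D unused, and the image of that letter contributes extra positive length.\<close>
lemma size1_less_if_card_less: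
  assumes fac: "factors_through D C B \<tau> q p" and card: "card C < card D"
  shows "size1 C p < size1 D \<tau>"
proof -
  have fD: "finite D" and fC: "finite C" and mq: "morphism D C q" and mp: "morphism C B p"
    using fac by (auto simp: factors_through_def morphism_def)
  from fac obtain g where g: "\<And>c. c \<in> C \<Longrightarrow> g c \<in> D \<and> c \<in> set (q (g c))"
    unfolding factors_through_def letter_onto_def by metis
  have "card (g ` C) < card D" using card_image_le[OF fC, of g] card by linarith
  moreover have "g ` C \<subseteq> D" using g by blast
  ultimately obtain x0 where x0: "x0 \<in> D" "x0 \<notin> g ` C" by (metis subsetI subset_antisym order_less_irrefl)
  have "ext p (q x0) \<noteq> []"
    using mp mq x0(1) by (intro morphism_ext_nonempty) (auto simp: morphism_def)
  then have pos: "0 < length (ext p (q x0))" by simp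
  have "size1 C p = (\<Sum>x\<in>g ` C. \<Sum>c\<in>{c\<in>C. g c = x}. length (p c))"
    unfolding size1_def using sum.image_gen[OF fC] by blast
  also have "\<dots> \<le> (\<Sum>x\<in>g ` C. \<Sum>c\<in>set (q x). length (p c))"
    by (intro sum_mono sum_mono2) (auto dest: g)
  also have "\<dots> \<le> (\<Sum>x\<in>g ` C. length (ext p (q x)))"
    by (intro sum_mono) (simp add: length_ext sum_set_le_sum_list)
  also have "\<dots> < (\<Sum>x\<in>insert x0 (g ` C). length (ext p (q x)))"
    using pos x0 fC by simp
  also have "\<dots> \<le> (\<Sum>x\<in>D. length (ext p (q x)))"
    by (rule sum_mono2) (use fD x0 g in auto)
  also have "\<dots> = size1 D \<tau>"
    using fac unfolding size1_def factors_through_def by simp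
  finally show ?thesis .
qed

definition reducible :: "'a set \<Rightarrow> 'b set \<Rightarrow> ('a \<Rightarrow> 'b list) \<Rightarrow> bool" where
  "reducible A B \<sigma> \<longleftrightarrow> (\<exists>(C :: 'a set) q p.
     factors_through A C B \<sigma> q p \<and> card C \<le> card A \<and> size1 C p < size1 A \<sigma>)"

text \<open>The intermediate alphabet may live in any type: not being larger than A, it can be renamed
  into the type of A.\<close>
lemma reducibleI:
  fixes C :: "'c set"
  assumes fac: "factors_through A C B \<sigma> q p"
    and card: "card C \<le> card A" and size: "size1 C p < size1 A \<sigma>"
  shows "reducible A B \<sigma>"
proof -
  have fA: "finite A" and fC: "finite C" using fac by (auto simp: factors_through_def morphism_def)
  obtain g where g: "g ` C \<subseteq> A" "inj_on g C" using card_le_inj[OF fC fA card] by blast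
  define p' where "p' = (\<lambda>c. p (the_inv_into C g c))"
  have p'g: "p' (g c) = p c" if "c \<in> C" for c
    unfolding p'_def using the_inv_into_f_f[OF g(2) that] by simp
  have ext_p'g: "ext p' (map g w) = ext p w" if "set w \<subseteq> C" for w
    using that by (induction w) (auto simp: p'g)
  have "factors_through A (g ` C) B \<sigma> (\<lambda>x. map g (q x)) p'"
    using fac unfolding factors_through_def morphism_def letter_onto_def
    by (auto simp: p'g ext_p'g) (metis image_eqI)
  moreover have "size1 (g ` C) p' = size1 C p"
    unfolding size1_def by (simp add: sum.reindex[OF g(2)] p'g)
  ultimately show ?thesis
    unfolding reducible_def using card card_image[OF g(2)] size by (metis le_trans)
qed

definition merge_letter :: "'a \<Rightarrow> 'a \<Rightarrow> 'a \<Rightarrow> 'a list" where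
  "merge_letter x y w = [if w = y then x else w]"

definition nielsen :: "'a \<Rightarrow> 'a \<Rightarrow> 'a \<Rightarrow> 'a list" where
  "nielsen x y w = (if w = y then [x, y] else [w])"

lemma factors_through_merge_letter:
  assumes "morphism D B \<tau>" "x \<in> D" "x \<noteq> y" "\<tau> y = \<tau> x"
  shows "factors_through D (D - {y}) B \<tau> (merge_letter x y) \<tau>"
  using assms unfolding factors_through_def morphism_def letter_onto_def merge_letter_def
  by auto

lemma factors_through_nielsen:
  assumes "morphism D B \<tau>" "x \<in> D" "y \<in> D" "x \<noteq> y" "\<tau> y = \<tau> x @ z" "z \<noteq> []"
  shows "factors_through D D B \<tau> (nielsen x y) (\<tau>(y := z))"
  using assms unfolding factors_through_def morphism_def letter_onto_def nielsen_def
  by (auto simp: subset_iff)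

lemma size1_fun_upd_less:
  assumes "finite D" "y \<in> D" "length z < length (\<tau> y)"
  shows "size1 D (\<tau>(y := z)) < size1 D \<tau>"
  using assms by (simp add: size1_def sum.remove)

lemma reducible_if_prefix_letters:
  assumes m: "morphism A B \<sigma>" and xy: "x \<in> A" "y \<in> A" "x \<noteq> y"
    and pre: "prefix (\<sigma> x) (\<sigma> y)"
  shows "reducible A B \<sigma>"
proof -
  from pre obtain z where z: "\<sigma> y = \<sigma> x @ z" by (auto simp: prefix_def)
  have fA: "finite A" and "\<sigma> x \<noteq> []" using m xy by (auto simp: morphism_def)
  show ?thesis
  proof (cases "z = []")
    case True
    then have fac: "factors_through A (A - {y}) B \<sigma> (merge_letter x y) \<sigma>"
      using factors_through_merge_letter m xy z by simp
    have card: "card (A - {y}) < card A" using fA xy(2) by (rule card_Diff1_less)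
    show ?thesis using reducibleI[OF fac] card size1_less_if_card_less[OF fac card] by simp
  next
    case False
    have "size1 A (\<sigma>(y := z)) < size1 A \<sigma>"
      using size1_fun_upd_less[OF fA xy(2), of z \<sigma>] z \<open>\<sigma> x \<noteq> []\<close> by simp
    then show ?thesis by (rule reducibleI[OF factors_through_nielsen[OF m xy z False] order_refl])
  qed
qed

text \<open>This is the proof of the defect theorem: cancelling the shorter of the first two
  letter images either identifies two letters, or produces a shorter morphism
  with a new nontrivial relation.\<close>
lemma factors_through_smaller_alphabet_if_relation:
  fixes D :: "'d set"
  assumes "morphism D B \<tau>" "U \<noteq> []" "V \<noteq> []" "set U \<subseteq> D" "set V \<subseteq> D"
    and "ext \<tau> U = ext \<tau> V" "hd U \<noteq> hd V"
  shows "\<exists>(C :: 'd set) q p. factors_through D C B \<tau> q p \<and> card C < card D"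
  using assms
proof (induction "size1 D \<tau>" arbitrary: \<tau> U V rule: less_induct)
  case less
  have fD: "finite D" using less.prems(1) by (simp add: morphism_def)
  obtain x U' y V' where xy: "x \<in> D" "y \<in> D" "x \<noteq> y" and sets: "set U' \<subseteq> D" "set V' \<subseteq> D"
    and rel: "ext \<tau> (x # U') = ext \<tau> (y # V')" and pre: "prefix (\<tau> x) (\<tau> y)"
  proof -
    obtain a U0 b V0 where U: "U = a # U0" and V: "V = b # V0"
      using less.prems(2,3) by (meson list.exhaust)
    have "prefix (\<tau> a) (ext \<tau> V)" "prefix (\<tau> b) (ext \<tau> V)"
      using less.prems(6) U V by (metis ext_Cons prefixI)+
    then have "prefix (\<tau> a) (\<tau> b) \<or> prefix (\<tau> b) (\<tau> a)" by (rule prefix_same_cases)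
    then show thesis
    proof
      assume "prefix (\<tau> a) (\<tau> b)"
      show thesis by (rule that[of a b U0 V0]) (use less.prems U V \<open>prefix (\<tau> a) (\<tau> b)\<close> in auto)
    next
      assume "prefix (\<tau> b) (\<tau> a)"
      show thesis by (rule that[of b a V0 U0]) (use less.prems U V \<open>prefix (\<tau> b) (\<tau> a)\<close> in auto)
    qed
  qed
  from pre obtain z where z: "\<tau> y = \<tau> x @ z" by (auto simp: prefix_def)
  show ?case
  proof (cases "z = []")
    case True
    then have "factors_through D (D - {y}) B \<tau> (merge_letter x y) \<tau>"
      using factors_through_merge_letter[OF less.prems(1) xy(1,3)] z by simp
    moreover have "card (D - {y}) < card D" using fD xy(2) by (rule card_Diff1_less)
    ultimately show ?thesis by blast
  next
    case False
    define \<tau>' where "\<tau>' = \<tau>(y := z)"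
    have fac: "factors_through D D B \<tau> (nielsen x y) \<tau>'"
      unfolding \<tau>'_def by (rule factors_through_nielsen[OF less.prems(1) xy z False])
    then have m': "morphism D B \<tau>'" and mh: "morphism D D (nielsen x y)"
      by (simp_all add: factors_through_def)
    have "\<tau> x \<noteq> []" using less.prems(1) xy by (simp add: morphism_def)
    then have smaller: "size1 D \<tau>' < size1 D \<tau>"
      unfolding \<tau>'_def using size1_fun_upd_less[OF fD xy(2), of z \<tau>] z by simp
    have \<tau>: "ext \<tau> W = ext \<tau>' (ext (nielsen x y) W)" for W
      unfolding \<tau>'_def nielsen_def using z xy(3) by (induction W) auto
    have U'rel: "ext \<tau> U' = z @ ext \<tau> V'" using rel z by simp
    then obtain w U2 where U': "U' = w # U2" using False by (cases U') auto
    define U'' where "U'' = ext (nielsen x y) U'"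
    define V'' where "V'' = y # ext (nielsen x y) V'"
    have rel'': "ext \<tau>' U'' = ext \<tau>' V''"
      using U'rel \<tau>[of U'] \<tau>[of V'] unfolding U''_def V''_def \<tau>'_def by simp
    have hd'': "hd U'' \<noteq> hd V''" and ne'': "U'' \<noteq> []" "V'' \<noteq> []"
      unfolding U''_def V''_def U' nielsen_def using xy(3) by auto
    have sets'': "set U'' \<subseteq> D" "set V'' \<subseteq> D"
      unfolding U''_def V''_def using morphism_set_ext[OF mh] sets xy by auto
    obtain C :: "'d set" and q p where "factors_through D C B \<tau>' q p" "card C < card D"
      using less.hyps[OF smaller m' ne'' sets'' rel'' hd''] by blast
    then show ?thesis using factors_through_trans[OF fac] by blast
  qed
qed

text \<open>Splitting the image of x0 as al ga: the letter Some x0 takes the image al and the new letter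
  None the image ga.\<close>
definition split_letter :: "'a \<Rightarrow> 'a \<Rightarrow> 'a option list" where
  "split_letter x0 x = (if x = x0 then [Some x, None] else [Some x])"

definition split_images :: "('a \<Rightarrow> 'b list) \<Rightarrow> 'a \<Rightarrow> 'b list \<Rightarrow> 'b list \<Rightarrow> 'a option \<Rightarrow> 'b list" where
  "split_images \<sigma> x0 al ga z = (case z of None \<Rightarrow> ga | Some x \<Rightarrow> if x = x0 then al else \<sigma> x)"

lemma ext_split_images_split_letter:
  "\<sigma> x0 = al @ ga \<Longrightarrow> ext (split_images \<sigma> x0 al ga) (ext (split_letter x0) w) = ext \<sigma> w"
  by (induction w) (auto simp: split_images_def split_letter_def)

lemma hd_ext_split_letter: "w \<noteq> [] \<Longrightarrow> hd (ext (split_letter x0) w) = Some (hd w)"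
  by (cases w) (auto simp: split_letter_def)

lemma factors_through_split_letter:
  assumes "morphism A B \<sigma>" "x0 \<in> A" "\<sigma> x0 = al @ ga" "al \<noteq> []" "ga \<noteq> []"
  shows "factors_through A (insert None (Some ` A)) B \<sigma> (split_letter x0) (split_images \<sigma> x0 al ga)"
  using assms ext_split_images_split_letter[of \<sigma> x0 al ga "[_]"]
  unfolding factors_through_def morphism_def letter_onto_def
  by (auto simp: split_letter_def split_images_def subset_iff)

lemma size1_split_images:
  assumes "finite A" "x0 \<in> A" "\<sigma> x0 = al @ ga"
  shows "size1 (insert None (Some ` A)) (split_images \<sigma> x0 al ga) = size1 A \<sigma>"
proof -
  have "size1 (insert None (Some ` A)) (split_images \<sigma> x0 al ga)
      = length ga + (\<Sum>x\<in>A. length (if x = x0 then al else \<sigma> x))"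
    using assms(1) by (simp add: size1_def split_images_def sum.reindex)
  also have "\<dots> = size1 A \<sigma>"
    using assms by (simp add: size1_def sum.remove sum.If_cases Int_absorb1)
  finally show ?thesis .
qed

text \<open>The split raises the alphabet size by one and preserves the total length, while the
  factorization given by the defect theorem lowers both.\<close>
lemma reducible_if_split_relation:
  assumes m: "morphism A B \<sigma>" and x0: "x0 \<in> A" and split: "\<sigma> x0 = al @ ga" "al \<noteq> []" "ga \<noteq> []"
    and W: "W1 \<noteq> []" "W2 \<noteq> []" "set W1 \<subseteq> insert None (Some ` A)" "set W2 \<subseteq> insert None (Some ` A)"
    and rel: "ext (split_images \<sigma> x0 al ga) W1 = ext (split_images \<sigma> x0 al ga) W2"
    and hd: "hd W1 \<noteq> hd W2"
  shows "reducible A B \<sigma>"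
proof -
  let ?D = "insert None (Some ` A)" and ?\<tau> = "split_images \<sigma> x0 al ga"
  have fA: "finite A" using m by (simp add: morphism_def)
  have fac: "factors_through A ?D B \<sigma> (split_letter x0) ?\<tau>"
    by (rule factors_through_split_letter[OF m x0 split])
  then have "morphism ?D B ?\<tau>" by (simp add: factors_through_def)
  then obtain C :: "'a option set" and q p where C: "factors_through ?D C B ?\<tau> q p" "card C < card ?D"
    using factors_through_smaller_alphabet_if_relation[OF _ W rel hd] by blast
  have "card ?D = Suc (card A)" using fA by (simp add: card_image)
  moreover have "size1 C p < size1 A \<sigma>"
    using size1_less_if_card_less[OF C] size1_split_images[of A x0 \<sigma>, OF fA x0 split(1)] by simp
  ultimately show ?thesis using reducibleI[OF factors_through_trans[OF fac C(1)]] C(2) by simp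
qed

lemma reducible_if_suffix_relation:
  assumes m: "morphism A B \<sigma>" and x0: "x0 \<in> A" and split: "\<sigma> x0 = al @ ga" "al \<noteq> []" "ga \<noteq> []"
    and w: "set w1 \<subseteq> A" "set w2 \<subseteq> A" "w2 \<noteq> []"
    and rel: "ga @ ext \<sigma> w1 = ext \<sigma> w2"
  shows "reducible A B \<sigma>"
proof (rule reducible_if_split_relation[OF m x0 split])
  let ?h = "split_letter x0" and ?\<tau> = "split_images \<sigma> x0 al ga"
  have "morphism A (insert None (Some ` A)) ?h"
    using factors_through_split_letter[OF m x0 split] by (simp add: factors_through_def)
  then have "set (ext ?h w) \<subseteq> insert None (Some ` A)" if "set w \<subseteq> A" for w
    using that by (rule morphism_set_ext)
  then show "set (None # ext ?h w1) \<subseteq> insert None (Some ` A)" "set (ext ?h w2) \<subseteq> insert None (Some ` A)"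
    using w by auto
  show "ext ?h w2 \<noteq> []" "hd (None # ext ?h w1) \<noteq> hd (ext ?h w2)"
    using w(3) by (auto simp: hd_ext_split_letter ext_eq_Nil_iff split_letter_def ex_in_conv)
  show "ext ?\<tau> (None # ext ?h w1) = ext ?\<tau> (ext ?h w2)"
    using rel split(1) by (simp add: ext_split_images_split_letter split_images_def)
qed simp

lemma reducible_if_conjugacy_relation:
  assumes m: "morphism A B \<sigma>" and y: "y \<in> A" and split: "\<sigma> y = al @ ga" "al \<noteq> []" "ga \<noteq> []"
    and w: "set w1 \<subseteq> A" "set w2 \<subseteq> A" "w1 \<noteq> []"
    and rel: "ext \<sigma> w1 = ga @ ext \<sigma> w2 @ al"
  shows "reducible A B \<sigma>"
proof (rule reducible_if_split_relation[OF m y split])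
  let ?h = "split_letter y" and ?\<tau> = "split_images \<sigma> y al ga"
  have "morphism A (insert None (Some ` A)) ?h"
    using factors_through_split_letter[OF m y split] by (simp add: factors_through_def)
  then have "set (ext ?h w) \<subseteq> insert None (Some ` A)" if "set w \<subseteq> A" for w
    using that by (rule morphism_set_ext)
  then show "set (ext ?h w1) \<subseteq> insert None (Some ` A)"
    "set (None # ext ?h w2 @ [Some y]) \<subseteq> insert None (Some ` A)"
    using w y by auto
  show "ext ?h w1 \<noteq> []" "hd (ext ?h w1) \<noteq> hd (None # ext ?h w2 @ [Some y])"
    using w(3) by (auto simp: hd_ext_split_letter ext_eq_Nil_iff split_letter_def ex_in_conv)
  show "ext ?\<tau> (ext ?h w1) = ext ?\<tau> (None # ext ?h w2 @ [Some y])"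
    using rel split(1) by (simp add: ext_split_images_split_letter split_images_def)
qed simp

lemma nonempty_prefix_of_ext:
  assumes "prefix r (ext \<sigma> v)" "r \<noteq> []"
  shows "\<exists>v1 y al. prefix (v1 @ [y]) v \<and> prefix al (\<sigma> y) \<and> al \<noteq> [] \<and> r = ext \<sigma> v1 @ al"
  using assms
proof (induction v arbitrary: r)
  case Nil
  then show ?case by simp
next
  case (Cons y v)
  have "prefix r (\<sigma> y) \<or> prefix (\<sigma> y) r"
    using Cons.prems(1) prefix_same_cases[of r "ext \<sigma> (y # v)" "\<sigma> y"] by auto
  then show ?case
  proof
    assume "prefix r (\<sigma> y)"
    then show ?case using Cons.prems(2) by (intro exI[of _ "[]"]) auto
  next
    assume "prefix (\<sigma> y) r"
    then obtain r' where r: "r = \<sigma> y @ r'" by (auto simp: prefix_def)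
    show ?case
    proof (cases "r' = []")
      case True
      then show ?thesis using r Cons.prems(2) by (intro exI[of _ "[]"]) auto
    next
      case False
      have "prefix r' (ext \<sigma> v)" using Cons.prems(1) r by simp
      with Cons.IH[OF _ False] obtain v1 y' al where
        "prefix (v1 @ [y']) v" "prefix al (\<sigma> y')" "al \<noteq> []" "r' = ext \<sigma> v1 @ al"
        by blast
      then show ?thesis using r by (intro exI[of _ "y # v1"]) auto
    qed
  qed
qed

lemma cut_of_ext_take:
  assumes pre: "prefix (ext \<sigma> u) (s @ ext \<sigma> v)" and hd: "\<sigma> (hd u) = s @ t"
    and "t \<noteq> []" "u \<noteq> []" "0 < i"
  shows "\<exists>v1 y al. prefix (v1 @ [y]) v \<and> prefix al (\<sigma> y) \<and> al \<noteq> [] \<and>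
           ext \<sigma> (take i u) = s @ ext \<sigma> v1 @ al"
proof -
  have take: "take i u = hd u # take (i - 1) (tl u)"
    using assms(4,5) by (cases u; cases i) auto
  have "prefix (ext \<sigma> (take i u)) (ext \<sigma> u)"
    by (rule prefix_ext) (rule take_is_prefix)
  then have "prefix (s @ t @ ext \<sigma> (take (i - 1) (tl u))) (s @ ext \<sigma> v)"
    using pre hd take by (metis prefix_order.trans append_assoc ext_Cons)
  then have "prefix (t @ ext \<sigma> (take (i - 1) (tl u))) (ext \<sigma> v)" by simp
  from nonempty_prefix_of_ext[OF this] show ?thesis
    using take hd \<open>t \<noteq> []\<close> by auto
qed

lemma prefix_snoc_if_ext_longer:
  assumes "prefix (a @ [y]) v" "prefix b v" "length (ext \<sigma> a) < length (ext \<sigma> b)"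
  shows "prefix (a @ [y]) b"
proof -
  have "prefix (a @ [y]) b \<or> prefix b (a @ [y])" using assms(1,2) by (rule prefix_same_cases)
  moreover have "\<not> prefix b a"
    using assms(3) prefix_length_le[OF prefix_ext[of b a \<sigma>]] by auto
  ultimately show ?thesis by auto
qed

lemma relation_if_cuts_repeat:
  assumes ij: "i < j" "j \<le> length u" and nonempty: "\<forall>x\<in>set u. \<sigma> x \<noteq> []"
    and v: "prefix (v1 @ [y]) v" "prefix (v1' @ [y]) v" and y: "\<sigma> y = al @ ga"
    and cut: "ext \<sigma> (take i u) = s @ ext \<sigma> v1 @ al" "ext \<sigma> (take j u) = s @ ext \<sigma> v1' @ al"
  shows "\<exists>U0 V0. U0 \<noteq> [] \<and> set U0 \<subseteq> set u \<and> set V0 \<subseteq> set v \<and> ext \<sigma> U0 = ga @ ext \<sigma> V0 @ al"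
proof -
  define U0 where "U0 = drop i (take j u)"
  have take: "take j u = take i u @ U0"
    unfolding U0_def using ij by (metis append_take_drop_id less_imp_le take_take min_absorb1)
  have "U0 \<noteq> []" "set U0 \<subseteq> set u"
    unfolding U0_def using ij by (auto dest: in_set_dropD in_set_takeD)
  then have "ext \<sigma> U0 \<noteq> []" using nonempty by (auto simp: ext_eq_Nil_iff neq_Nil_conv)
  moreover have "length (ext \<sigma> v1') = length (ext \<sigma> v1) + length (ext \<sigma> U0)"
    using arg_cong[OF take, of "\<lambda>w. length (ext \<sigma> w)"] cut by simp
  ultimately have "length (ext \<sigma> v1) < length (ext \<sigma> v1')" by simp
  then have "prefix (v1 @ [y]) v1'"
    using prefix_snoc_if_ext_longer[OF v(1) append_prefixD[OF v(2)], of \<sigma>] by simp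
  then obtain V0 where V0: "v1' = v1 @ y # V0" by (auto simp: prefix_def)
  have "s @ ext \<sigma> v1 @ al @ ext \<sigma> U0 = s @ ext \<sigma> v1 @ al @ ga @ ext \<sigma> V0 @ al"
    using cut take V0 y by simp
  then have "ext \<sigma> U0 = ga @ ext \<sigma> V0 @ al" by simp
  moreover have "set V0 \<subseteq> set v" using set_mono_prefix[OF v(2)] V0 by auto
  ultimately show ?thesis using \<open>U0 \<noteq> []\<close> \<open>set U0 \<subseteq> set u\<close> by blast
qed

lemma collision_if_more_indices_than_offsets:
  fixes I :: "nat set"
  assumes "finite A" "size1 A \<sigma> < card I" "\<And>i. i \<in> I \<Longrightarrow> Y i \<in> A \<and> n i < length (\<sigma> (Y i))"
  shows "\<exists>i\<in>I. \<exists>j\<in>I. i < j \<and> Y i = Y j \<and> n i = n j"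
proof -
  have "(\<lambda>i. (Y i, n i)) ` I \<subseteq> Sigma A (\<lambda>y. {..<length (\<sigma> y)})" using assms(3) by auto
  moreover have "card (Sigma A (\<lambda>y. {..<length (\<sigma> y)})) < card I"
    using assms(1,2) by (simp add: size1_def)
  ultimately have "\<not> inj_on (\<lambda>i. (Y i, n i)) I"
    using card_inj_on_le assms(1) by (metis finite_SigmaI finite_lessThan leD)
  then show ?thesis unfolding inj_on_def by (metis linorder_neq_iff prod.inject)
qed

lemma reducible_if_long_overlap:
  assumes m: "morphism A B \<sigma>" and u: "u \<noteq> []" "set u \<subseteq> A" and v: "set v \<subseteq> A"
    and hd: "\<sigma> (hd u) = s @ t" "s \<noteq> []" "t \<noteq> []"
    and pre: "prefix (ext \<sigma> u) (s @ ext \<sigma> v)" and long: "size1 A \<sigma> < length u"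
  shows "reducible A B \<sigma>"
proof -
  have fA: "finite A" and nonempty: "\<forall>x\<in>set u. \<sigma> x \<noteq> []" and hdA: "hd u \<in> A"
    using m u by (auto simp: morphism_def)
  define I where "I = {1..length u}"
  have "\<forall>i\<in>I. \<exists>v1 y al. prefix (v1 @ [y]) v \<and> prefix al (\<sigma> y) \<and> al \<noteq> [] \<and>
      ext \<sigma> (take i u) = s @ ext \<sigma> v1 @ al"
    unfolding I_def using cut_of_ext_take[OF pre hd(1) hd(3) u(1)] by auto
  then obtain V1 Y AL where cut: "\<And>i. i \<in> I \<Longrightarrow> prefix (V1 i @ [Y i]) v \<and> prefix (AL i) (\<sigma> (Y i)) \<and>
      AL i \<noteq> [] \<and> ext \<sigma> (take i u) = s @ ext \<sigma> (V1 i) @ AL i"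
    by metis
  have Y: "Y i \<in> A" if "i \<in> I" for i
    using cut[OF that] v set_mono_prefix by fastforce
  show ?thesis
  proof (cases "\<exists>i\<in>I. AL i = \<sigma> (Y i)")
    case True
    then obtain i where i: "i \<in> I" "AL i = \<sigma> (Y i)" by blast
    have "take i u = hd u # take (i - 1) (tl u)"
      using u(1) i(1) by (cases u; cases i) (auto simp: I_def)
    then have "t @ ext \<sigma> (take (i - 1) (tl u)) = ext \<sigma> (V1 i @ [Y i])"
      using cut[OF i(1)] i(2) hd(1) by simp
    moreover have "set (take (i - 1) (tl u)) \<subseteq> A"
      using u by (cases u) (auto dest: in_set_takeD)
    moreover have "set (V1 i @ [Y i]) \<subseteq> A"
      using v cut[OF i(1)] by (meson order_trans set_mono_prefix)
    ultimately show ?thesis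
      using reducible_if_suffix_relation[OF m hdA hd] by blast
  next
    case False
    have AL: "AL i = take (length (AL i)) (\<sigma> (Y i))" "length (AL i) < length (\<sigma> (Y i))" if "i \<in> I" for i
      using cut[OF that] False that prefix_length_less[of "AL i" "\<sigma> (Y i)"] by (auto simp: prefix_def)
    obtain i j where ij: "i \<in> I" "j \<in> I" "i < j" "Y i = Y j" "length (AL i) = length (AL j)"
      using collision_if_more_indices_than_offsets[of A \<sigma> I Y "\<lambda>i. length (AL i)"] fA long AL(2) Y
      by (auto simp: I_def)
    then have same: "Y j = Y i" "AL j = AL i" using AL by metis+
    obtain ga where ga: "\<sigma> (Y i) = AL i @ ga" "ga \<noteq> []" using cut[OF ij(1)] False ij(1)
      by (auto simp: prefix_def)
    have "j \<le> length u" using ij(2) by (simp add: I_def)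
    moreover have "prefix (V1 i @ [Y i]) v" "ext \<sigma> (take i u) = s @ ext \<sigma> (V1 i) @ AL i"
      using cut[OF ij(1)] by auto
    moreover have "prefix (V1 j @ [Y i]) v" "ext \<sigma> (take j u) = s @ ext \<sigma> (V1 j) @ AL i"
      using cut[OF ij(2)] same by auto
    ultimately obtain U0 V0 where
      "U0 \<noteq> []" "set U0 \<subseteq> set u" "set V0 \<subseteq> set v" "ext \<sigma> U0 = ga @ ext \<sigma> V0 @ AL i"
      using relation_if_cuts_repeat[OF ij(3) _ nonempty _ _ ga(1)] by blast
    then show ?thesis
      using reducible_if_conjugacy_relation[OF m Y[OF ij(1)] ga(1) _ ga(2)] cut[OF ij(1)] u(2) v by blast
  qed
qed

theorem lemma3p4:
  fixes A :: "'a set" and B :: "'b set" and \<sigma> :: "'a \<Rightarrow> 'b list"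
    and u v :: "'a list" and s t :: "'b list"
  assumes "morphism A B \<sigma>"
    and "u \<noteq> []" "set u \<subseteq> A" "v \<noteq> []" "set v \<subseteq> A"
    and "\<sigma> (hd u) = s @ t" "t \<noteq> []"
    and "prefix (ext \<sigma> u) (s @ ext \<sigma> v)"
    and "length u \<ge> size1 A \<sigma> + length s"
    and "(s = [] \<and> hd u \<noteq> hd v) \<or> s \<noteq> []"
  shows "\<exists>(C :: 'a set) (q :: 'a \<Rightarrow> 'a list) (p :: 'a \<Rightarrow> 'b list).
           morphism A C q \<and> morphism C B p \<and>
           card C \<le> card A \<and> letter_onto A C q \<and> size1 C p < size1 A \<sigma> \<and>
           (\<forall>x\<in>A. \<sigma> x = ext p (q x))"
proof -
  have "reducible A B \<sigma>"
  proof (cases "s = []")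
    case True
    have "prefix (\<sigma> (hd u)) (ext \<sigma> v)"
      using assms(2,8) True prefix_order.trans[OF prefix_ext[OF take_is_prefix[of 1 u]]]
      by (cases u) auto
    moreover have "prefix (\<sigma> (hd v)) (ext \<sigma> v)" using assms(4) by (cases v) auto
    ultimately have "prefix (\<sigma> (hd u)) (\<sigma> (hd v)) \<or> prefix (\<sigma> (hd v)) (\<sigma> (hd u))"
      by (rule prefix_same_cases)
    moreover have "hd u \<in> A" "hd v \<in> A" "hd u \<noteq> hd v"
      using assms(2-5,10) True by auto
    ultimately show ?thesis using reducible_if_prefix_letters[OF assms(1)] by metis
  next
    case False
    then have "size1 A \<sigma> < length u" using assms(9) by (cases s) auto
    then show ?thesis by (rule reducible_if_long_overlap[OF assms(1-3,5-6) False assms(7,8)])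
  qed
  then show ?thesis unfolding reducible_def factors_through_def by blast
qed

end
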